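(* Let $A_1,\dots,A_k,A$ be formulas of $\mathcal{L}_\infty$ and $m_1,\dots,m_k,n$ natural numbers such that $\Box_{m_i}A_i$ ($1\le i\le k$) and $\Box_nA$ are formulas of $\mathcal{L}_\infty$. (i) If $\bigwedge_{i=1}^k\Box_{m_i}A_i\vdash_{\mathbf{K4}_h}A$ and $m_i\le n$ for all $i$, then $\bigwedge_{i=1}^k\Box_{m_i}A_i\vdash_{\mathbf{K4}_h}\Box_nA$. (ii) If $\bigwedge_{i=1}^k\Box_{m_i}A_i\vdash_{\mathbf{S4}_h}A$ and $m_i\le n$ for all $i$, then $\bigwedge_{i=1}^k\Box_{m_i}A_i\vdash_{\mathbf{S4}_h}\Box_nA$.
   Context: The language $\mathcal{L}_\infty$ consists of modal formulas built from propositional atoms, $\bot,\top$, the connectives $\neg,\wedge,\vee,\rightarrow$ and unary modalities $\Box_n$ ($n\in\mathbb{N}$), with the restriction that $\Box_n A$ is a formula only if $n$ is strictly greater than the index of every box occurring in $A$. All formulas are in $\mathcal{L}_\infty$; axiom instances are only those that are $\mathcal{L}_\infty$-formulas. Axiom schemes (for all $n\ge0$): $\mathbf{H}$: $\Box_n A\rightarrow\Box_{n+1}A$; $\mathbf{K}_h$: $\Box_n(A\rightarrow B)\rightarrow(\Box_nA\rightarrow\Box_nB)$; $\mathbf{4}_h$: $\Box_nA\rightarrow\Box_{n+1}\Box_nA$; $\mathbf{T}_h$: $\Box_nA\rightarrow A$. For a set $X$ of schemes, $L(X)$ is the least set of $\mathcal{L}_\infty$-formulas containing all classical propositional tautologies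 and all instances of the schemes in $X$, closed under modus ponens and the rule: from $A$ infer $\Box_nA$ for any $n$ greater than all box indices in $A$. $\mathbf{K4}_h=L(\mathbf{H},\mathbf{K}_h,\mathbf{4}_h)$, $\mathbf{S4}_h=L(\mathbf{H},\mathbf{K}_h,\mathbf{4}_h,\mathbf{T}_h)$. For a set $\Gamma$ of formulas, $\Gamma\vdash_{L}A$ means there is a finite $\Delta\subseteq\Gamma$ with $\bigwedge\Delta\rightarrow A\in L$. *)

theory Defs
  imports Main
begin

datatype fm = Atom nat | Bot | Top | Neg fm | And fm fm | Or fm fm | Imp fm fm | Box nat fm

fun boxidx :: "fm \<Rightarrow> nat set" where
  "boxidx (Atom p) = {}"
| "boxidx Bot = {}"
| "boxidx Top = {}"
| "boxidx (Neg A) = boxidx A"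
| "boxidx (And A B) = boxidx A \<union> boxidx B"
| "boxidx (Or A B) = boxidx A \<union> boxidx B"
| "boxidx (Imp A B) = boxidx A \<union> boxidx B"
| "boxidx (Box n A) = insert n (boxidx A)"

text \<open>Membership in the language L_infinity.\<close>
fun wf :: "fm \<Rightarrow> bool" where
  "wf (Atom p) = True"
| "wf Bot = True"
| "wf Top = True"
| "wf (Neg A) = wf A"
| "wf (And A B) = (wf A \<and> wf B)"
| "wf (Or A B) = (wf A \<and> wf B)"
| "wf (Imp A B) = (wf A \<and> wf B)"
| "wf (Box n A) = (wf A \<and> (\<forall>m\<in>boxidx A. m < n))"

fun peval :: "(fm \<Rightarrow> bool) \<Rightarrow> fm \<Rightarrow> bool" where
  "peval v (Atom p) = v (Atom p)"
| "peval v Bot = False"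
| "peval v Top = True"
| "peval v (Neg A) = (\<not> peval v A)"
| "peval v (And A B) = (peval v A \<and> peval v B)"
| "peval v (Or A B) = (peval v A \<or> peval v B)"
| "peval v (Imp A B) = (peval v A \<longrightarrow> peval v B)"
| "peval v (Box n A) = v (Box n A)"

definition taut :: "fm \<Rightarrow> bool" where
  "taut A \<longleftrightarrow> (\<forall>v. peval v A)"

inductive hlog :: "bool \<Rightarrow> fm \<Rightarrow> bool" for t :: bool where
  tautI: "wf A \<Longrightarrow> taut A \<Longrightarrow> hlog t A"
| axH: "wf (Box (Suc n) A) \<Longrightarrow> hlog t (Imp (Box n A) (Box (Suc n) A))"
| axK: "wf (Imp (Box n (Imp A B)) (Imp (Box n A) (Box n B))) \<Longrightarrow>
        hlog t (Imp (Box n (Imp A B)) (Imp (Box n A) (Box n B)))"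
| ax4: "wf (Box (Suc n) (Box n A)) \<Longrightarrow> hlog t (Imp (Box n A) (Box (Suc n) (Box n A)))"
| axT: "t \<Longrightarrow> wf (Box n A) \<Longrightarrow> hlog t (Imp (Box n A) A)"
| mp: "hlog t (Imp A B) \<Longrightarrow> hlog t A \<Longrightarrow> hlog t B"
| nec: "hlog t A \<Longrightarrow> (\<forall>m\<in>boxidx A. m < n) \<Longrightarrow> hlog t (Box n A)"

abbreviation K4h :: "fm \<Rightarrow> bool" where "K4h \<equiv> hlog False"
abbreviation S4h :: "fm \<Rightarrow> bool" where "S4h \<equiv> hlog True"

definition conj :: "fm list \<Rightarrow> fm" where
  "conj ds = foldr And ds Top"

definition derives :: "(fm \<Rightarrow> bool) \<Rightarrow> fm set \<Rightarrow> fm \<Rightarrow> bool" where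
  "derives L \<Gamma> A \<longleftrightarrow> (\<exists>ds. set ds \<subseteq> \<Gamma> \<and> L (Imp (conj ds) A))"

end

theory Submission
  imports Defs
begin

text \<open>
  Collapse every modality of level at least n: in S4_h erase it (reading it by T), in
  K4_h replace the boxed formula by the constant true. Each axiom instance goes to an
  axiom instance or a tautology, so the collapse maps theorems to theorems, and it fixes
  formulas whose boxes all lie below n. Applied to a derivation of C \<longrightarrow> A, with
  C = \<And>i Box m_i A_i, it yields a derivation of \<And>i q_i \<longrightarrow> A in which all q_i have
  boxes below n, so necessitation at level n and K give \<And>i Box n q_i \<longrightarrow> Box n A.
  Finally C proves each Box n q_i: by 4 and H when m_i < n, and trivially when m_i = n,
  since then q_i is A_i (S4_h) or true (K4_h).
\<close>

(* Ill-formed boxes below n, which axiom H can produce since it only asks Box (Suc n) A to be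
   well formed, are sent to Bot so that the collapse of every formula is well formed. *)
fun collapse :: "bool \<Rightarrow> nat \<Rightarrow> fm \<Rightarrow> fm" where
  "collapse t n (Atom p) = Atom p"
| "collapse t n Bot = Bot"
| "collapse t n Top = Top"
| "collapse t n (Neg A) = Neg (collapse t n A)"
| "collapse t n (And A B) = And (collapse t n A) (collapse t n B)"
| "collapse t n (Or A B) = Or (collapse t n A) (collapse t n B)"
| "collapse t n (Imp A B) = Imp (collapse t n A) (collapse t n B)"
| "collapse t n (Box k A) =
     (if n \<le> k then (if t then collapse t n A else Top)
      else if boxidx A \<subseteq> {..<k} then Box k (collapse t n A) else Bot)"

lemma boxidx_collapse: "boxidx (collapse t n X) \<subseteq> boxidx X \<inter> {..<n}"
  by (induction X) auto

lemma wf_collapse: "wf (collapse t n X)"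
proof (induction X)
  case (Box k A)
  then show ?case using boxidx_collapse[of t n A] by auto
qed auto

lemma collapse_eq_self: "wf X \<Longrightarrow> \<forall>k\<in>boxidx X. k < n \<Longrightarrow> collapse t n X = X"
  by (induction X) auto

lemma peval_collapse:
  "peval v (collapse t n X) = peval (\<lambda>Y. peval v (collapse t n Y)) X"
  by (induction X) (simp_all del: collapse.simps(8))

lemma taut_collapse: "taut X \<Longrightarrow> taut (collapse t n X)"
  unfolding taut_def by (metis peval_collapse)

lemma wf_Box_collapse: "boxidx A \<subseteq> {..<k} \<Longrightarrow> wf (Box k (collapse t n A))"
  using wf_collapse boxidx_collapse by fastforce

lemma hlog_collapse: "hlog t X \<Longrightarrow> hlog t (collapse t n X)"
proof (induction rule: hlog.induct)
  case (tautI A)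
  then show ?case by (intro hlog.tautI wf_collapse taut_collapse)
next
  case (axH k A)
  then have wf: "wf (Box (Suc k) (collapse t n A))"
    by (intro wf_Box_collapse) auto
  consider "Suc k < n" | "Suc k = n" | "n \<le> k" by linarith
  then show ?case
  proof cases
    case 1
    then show ?thesis
      using wf axH by (auto intro!: hlog.axH hlog.tautI simp: taut_def)
  next
    case 2
    show ?thesis
    proof (cases "boxidx A \<subseteq> {..<k}")
      case True
      then have "wf (Box k (collapse t n A))" by (rule wf_Box_collapse)
      then show ?thesis
        using True 2 by (cases t) (auto intro: hlog.axT hlog.tautI simp: taut_def)
    qed (use 2 wf in \<open>auto intro!: hlog.tautI simp: taut_def\<close>)
  qed (use wf in \<open>auto intro!: hlog.tautI simp: taut_def\<close>)
next
  case (axK k A B)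
  then have "boxidx A \<subseteq> {..<k}" "boxidx B \<subseteq> {..<k}" by auto
  moreover note wf_Box_collapse[OF this(1), of t n] wf_Box_collapse[OF this(2), of t n]
  ultimately show ?case
    by (cases "k < n") (auto intro!: hlog.axK hlog.tautI simp: taut_def)
next
  case (ax4 k A)
  then have "boxidx A \<subseteq> {..<k}" by auto
  moreover note wf_Box_collapse[OF this, of t n]
  ultimately show ?case
    by (cases "Suc k < n") (auto intro!: hlog.ax4 hlog.tautI simp: taut_def less_SucI)
next
  case (axT k A)
  then have "boxidx A \<subseteq> {..<k}" by auto
  show ?case
  proof (cases "k < n")
    case True
    then show ?thesis
      using axT \<open>boxidx A \<subseteq> {..<k}\<close> wf_Box_collapse by (simp add: hlog.axT)
  qed (use axT wf_collapse in \<open>auto intro!: hlog.tautI simp: taut_def\<close>)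
next
  case (mp A B)
  then show ?case by (auto intro: hlog.mp)
next
  case (nec A k)
  show ?case
  proof (cases "k < n")
    case True
    then show ?thesis
      using nec boxidx_collapse[of t n A] by (auto intro: hlog.nec)
  qed (use nec in \<open>auto intro: hlog.tautI simp: taut_def\<close>)
qed

fun imps :: "fm list \<Rightarrow> fm \<Rightarrow> fm" where
  "imps [] A = A"
| "imps (X # Xs) A = Imp X (imps Xs A)"

lemma imps_append: "imps (Xs @ Ys) A = imps Xs (imps Ys A)"
  by (induction Xs) auto

lemma peval_imps: "peval v (imps Xs A) \<longleftrightarrow> ((\<forall>X\<in>set Xs. peval v X) \<longrightarrow> peval v A)"
  by (induction Xs) auto

lemma wf_imps: "wf (imps Xs A) \<longleftrightarrow> (\<forall>X\<in>set Xs. wf X) \<and> wf A"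
  by (induction Xs) auto

lemma boxidx_imps: "boxidx (imps Xs A) = (\<Union>X\<in>set Xs. boxidx X) \<union> boxidx A"
  by (induction Xs) auto

lemma peval_conj: "peval v (conj Xs) \<longleftrightarrow> (\<forall>X\<in>set Xs. peval v X)"
  by (induction Xs) (auto simp: conj_def)

lemma wf_conj: "wf (conj Xs) \<longleftrightarrow> (\<forall>X\<in>set Xs. wf X)"
  by (induction Xs) (auto simp: conj_def)

lemma collapse_conj: "collapse t n (conj Xs) = conj (map (collapse t n) Xs)"
  by (induction Xs) (auto simp: conj_def)

lemma hlog_imps_mp: "hlog t (imps Xs Y) \<Longrightarrow> \<forall>X\<in>set Xs. hlog t X \<Longrightarrow> hlog t Y"
proof (induction Xs)
  case (Cons X Xs)
  then show ?case using hlog.mp[of t X "imps Xs Y"] by simp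
qed simp

lemma hlog_taut_rule:
  "\<forall>X\<in>set Xs. hlog t X \<Longrightarrow> wf (imps Xs Y) \<Longrightarrow> taut (imps Xs Y) \<Longrightarrow> hlog t Y"
  using hlog_imps_mp hlog.tautI by blast

lemma hlog_taut_mp:
  "hlog t X \<Longrightarrow> wf (Imp X Y) \<Longrightarrow> taut (Imp X Y) \<Longrightarrow> hlog t Y"
  by (rule hlog_taut_rule[where Xs = "[X]"]) simp_all

lemma hlog_taut_mp2:
  "hlog t X1 \<Longrightarrow> hlog t X2 \<Longrightarrow> wf (Imp X1 (Imp X2 Y)) \<Longrightarrow> taut (Imp X1 (Imp X2 Y))
   \<Longrightarrow> hlog t Y"
  by (rule hlog_taut_rule[where Xs = "[X1, X2]"]) simp_all

lemma hlog_imps_under: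
  assumes "hlog t (imps Xs Y)" "\<forall>X\<in>set Xs. hlog t (Imp C X)" "wf C" "wf (imps Xs Y)"
  shows "hlog t (Imp C Y)"
proof (rule hlog_imps_mp)
  show "hlog t (imps (map (Imp C) Xs) (Imp C Y))"
    by (rule hlog_taut_mp[OF assms(1)])
      (use assms(3,4) in \<open>auto simp: taut_def peval_imps wf_imps\<close>)
qed (use assms(2) in auto)

lemma hlog_Box_mono:
  assumes "j \<le> k" "wf (Box j X)"
  shows "hlog t (Imp (Box j X) (Box k X))"
  using assms(1)
proof (induction k rule: dec_induct)
  case base
  then show ?case using assms(2) by (auto intro: hlog.tautI simp: taut_def)
next
  case (step i)
  have "hlog t (Imp (Box i X) (Box (Suc i) X))"
    using step.hyps assms(2) by (intro hlog.axH) auto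
  with step.IH show ?case
    by (rule hlog_taut_mp2) (use step.hyps assms(2) in \<open>auto simp: taut_def\<close>)
qed

lemma hlog_Box_collapse:
  assumes "wf (Box m B)" "m \<le> n"
  shows "hlog t (Imp (Box m B) (Box n (collapse t n (Box m B))))"
proof (cases "m < n")
  case True
  then have collapse_Box: "collapse t n (Box m B) = Box m B"
    using assms(1) by (intro collapse_eq_self) auto
  have wf: "wf (Box (Suc m) (Box m B))" "wf (Box n (Box m B))"
    using True assms(1) by auto
  have "hlog t (Imp (Box m B) (Box (Suc m) (Box m B)))"
    using wf by (intro hlog.ax4)
  moreover have "hlog t (Imp (Box (Suc m) (Box m B)) (Box n (Box m B)))"
    using True wf by (intro hlog_Box_mono) auto
  ultimately show ?thesis
    unfolding collapse_Box by (rule hlog_taut_mp2) (use wf in \<open>auto simp: taut_def\<close>)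
next
  case False
  then have "m = n" using assms(2) by simp
  then have collapse_B: "collapse t n B = B"
    using assms(1) by (intro collapse_eq_self) auto
  show ?thesis
  proof (cases t)
    case True
    then show ?thesis
      using \<open>m = n\<close> assms(1) collapse_B by (auto intro: hlog.tautI simp: taut_def)
  next
    case False
    have "hlog t (Box n Top)" by (intro hlog.nec hlog.tautI) (auto simp: taut_def)
    then have "hlog t (Imp (Box m B) (Box n Top))"
      by (rule hlog_taut_mp) (use assms(1) in \<open>auto simp: taut_def\<close>)
    then show ?thesis using \<open>m = n\<close> False by simp
  qed
qed

lemma hlog_conj_Box_collapse:
  assumes "Box m B \<in> set Bs" "\<forall>X\<in>set Bs. wf X" "m \<le> n"
  shows "hlog t (Imp (conj Bs) (Box n (collapse t n (Box m B))))"
proof -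
  have "hlog t (Imp (Box m B) (Box n (collapse t n (Box m B))))"
    using assms by (intro hlog_Box_collapse) auto
  moreover have "wf (Imp (conj Bs) (Box n (collapse t n (Box m B))))"
    using assms(2) wf_collapse boxidx_collapse by (fastforce simp: wf_conj)
  moreover have "taut (Imp (Imp (Box m B) (Box n (collapse t n (Box m B))))
                           (Imp (conj Bs) (Box n (collapse t n (Box m B)))))"
    using assms(1) by (auto simp: taut_def peval_conj)
  ultimately show ?thesis using assms hlog_taut_mp by (metis wf.simps(7))
qed

lemma hlog_Box_imps:
  "hlog t (imps Ps (Box n (imps Qs A))) \<Longrightarrow> wf (imps Ps (Box n (imps Qs A))) \<Longrightarrow>
   hlog t (imps (Ps @ map (Box n) Qs) (Box n A))"
proof (induction Qs arbitrary: Ps)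
  case Nil
  then show ?case by simp
next
  case (Cons q Qs)
  let ?R = "imps Qs A"
  let ?K = "Imp (Box n (Imp q ?R)) (Imp (Box n q) (Box n ?R))"
  have wf: "wf (Box n (Imp q ?R))" using Cons.prems(2) by (simp add: wf_imps)
  then have "hlog t ?K" by (intro hlog.axK) auto
  with Cons.prems(1) have "hlog t (imps (Ps @ [Box n q]) (Box n ?R))"
    by (rule hlog_taut_mp2)
      (use Cons.prems(2) wf in \<open>auto simp: taut_def peval_imps wf_imps imps_append\<close>)
  moreover have "wf (imps (Ps @ [Box n q]) (Box n ?R))"
    using Cons.prems(2) wf by (auto simp: wf_imps imps_append)
  ultimately show ?case using Cons.IH by fastforce
qed

lemma derives_singleton_iff:
  assumes "wf C" "wf X"
  shows "derives (hlog t) {C} X \<longleftrightarrow> hlog t (Imp C X)"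
proof
  assume "derives (hlog t) {C} X"
  then obtain ds where ds: "set ds \<subseteq> {C}" "hlog t (Imp (conj ds) X)"
    unfolding derives_def by blast
  from ds(2) show "hlog t (Imp C X)"
    by (rule hlog_taut_mp) (use ds(1) assms in \<open>auto simp: taut_def peval_conj wf_conj\<close>)
next
  assume "hlog t (Imp C X)"
  then have "hlog t (Imp (conj [C]) X)"
    by (rule hlog_taut_mp) (use assms in \<open>auto simp: taut_def conj_def\<close>)
  then show "derives (hlog t) {C} X"
    unfolding derives_def by (intro exI[of _ "[C]"]) auto
qed

lemma derives_Box:
  fixes ps :: "(nat \<times> fm) list"
  defines "Bs \<equiv> map (\<lambda>(m, B). Box m B) ps"
  assumes wf_ps: "\<forall>(m, B) \<in> set ps. wf (Box m B) \<and> m \<le> n"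
    and wf_A: "wf (Box n A)"
    and derives_A: "derives (hlog t) {conj Bs} A"
  shows "derives (hlog t) {conj Bs} (Box n A)"
proof -
  define Qs where "Qs = map (collapse t n) Bs"
  have wf_C: "wf (conj Bs)" using wf_ps by (auto simp: Bs_def wf_conj)
  have wf_Qs: "\<forall>q\<in>set Qs. wf (Box n q)"
    using boxidx_collapse wf_collapse by (fastforce simp: Qs_def)
  have wf_imps_Qs: "wf (Box n (imps Qs A))"
    using wf_Qs wf_A by (auto simp: wf_imps boxidx_imps)
  have "hlog t (Imp (conj Bs) A)"
    using derives_A wf_C wf_A derives_singleton_iff by auto
  then have "hlog t (collapse t n (Imp (conj Bs) A))" by (rule hlog_collapse)
  then have "hlog t (Imp (conj Qs) A)"
    using wf_A collapse_eq_self[of A n t] by (simp add: collapse_conj Qs_def)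
  then have "hlog t (imps Qs A)"
    by (rule hlog_taut_mp)
      (use wf_Qs wf_A in \<open>auto simp: taut_def peval_conj peval_imps wf_conj wf_imps\<close>)
  then have "hlog t (Box n (imps Qs A))"
    using wf_imps_Qs by (intro hlog.nec) auto
  then have "hlog t (imps (map (Box n) Qs) (Box n A))"
    using hlog_Box_imps[of t "[]"] wf_imps_Qs by simp
  moreover have "\<forall>X\<in>set (map (Box n) Qs). hlog t (Imp (conj Bs) X)"
    using wf_ps wf_C by (auto simp: Qs_def Bs_def wf_conj intro!: hlog_conj_Box_collapse)
  ultimately have "hlog t (Imp (conj Bs) (Box n A))"
    by (rule hlog_imps_under) (use wf_C wf_Qs wf_A in \<open>auto simp: wf_imps\<close>)
  then show ?thesis using wf_C wf_A derives_singleton_iff by blast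
qed

theorem theorem3p9:
  fixes ps :: "(nat \<times> fm) list" and n :: nat and A :: fm
  assumes "\<forall>(m, B) \<in> set ps. wf (Box m B)"
    and "wf (Box n A)"
    and "\<forall>(m, B) \<in> set ps. m \<le> n"
  shows "(derives K4h {conj (map (\<lambda>(m, B). Box m B) ps)} A
            \<longrightarrow> derives K4h {conj (map (\<lambda>(m, B). Box m B) ps)} (Box n A))
       \<and> (derives S4h {conj (map (\<lambda>(m, B). Box m B) ps)} A
            \<longrightarrow> derives S4h {conj (map (\<lambda>(m, B). Box m B) ps)} (Box n A))"
proof -
  have "\<forall>(m, B) \<in> set ps. wf (Box m B) \<and> m \<le> n" using assms(1,3) by auto
  then show ?thesis by (intro conjI impI derives_Box[OF _ assms(2)])
qed

end
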